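(* Let $(p(i),x(i))_{i\in\mathbb{Z}}$ be real sequences satisfying, for all $i\in\mathbb{Z}$, $$p(i+1)=p(i)-\operatorname{sgn}x(i),\qquad x(i+1)=x(i)+p(i)-\operatorname{sgn}x(i).$$ (1) If $x(K)=0$ for some $K\in\mathbb{Z}$, then $x(K-n)+x(K+n)=0$ for every integer $n\ge 1$. (2) Consequently, if $x(0)=x(K)=0$ for some integer $K\ge 1$, then $x(i+2K)=x(i)$ for all $i\in\mathbb{Z}$.
   Context: Here $\operatorname{sgn}(x)=x/|x|$ for $x\neq 0$ and $\operatorname{sgn}(0)=0$. The recursion is invertible, so a sequence on $\mathbb{Z}$ is determined by its value at any single index; equivalently the $x(i)$ satisfy $-x(i-1)+2x(i)-x(i+1)=\operatorname{sgn}x(i)$ for all $i$. *)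

theory Defs
  imports Complex_Main
begin

end

theory Submission
  imports Defs
begin

text \<open>Eliminating p turns the system into the second-order recurrence
  x(i-1) + x(i+1) = 2 x(i) - sgn x(i). It is invariant under the reflections i \<mapsto> c - i and,
  since sgn is odd, under negation, and a solution is determined by two consecutive values.
  At a zero K the solution i \<mapsto> -x(2K - i) agrees with x at K and K + 1, so it is x itself.
  Two zeros 0 and K give two point reflections whose composition is the shift by 2K.\<close>

definition sgn_recurrence :: "(int \<Rightarrow> 'a::linordered_idom) \<Rightarrow> bool" where
  "sgn_recurrence x \<longleftrightarrow> (\<forall>i. x (i - 1) + x (i + 1) = 2 * x i - sgn (x i))"

lemma sgn_recurrence_if_system:
  fixes p x :: "int \<Rightarrow> 'a::linordered_idom"
  assumes hp: "\<And>i. p (i + 1) = p i - sgn (x i)"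
      and hx: "\<And>i. x (i + 1) = x i + p i - sgn (x i)"
  shows "sgn_recurrence x"
  unfolding sgn_recurrence_def
proof
  fix i
  show "x (i - 1) + x (i + 1) = 2 * x i - sgn (x i)"
    using hx[of "i - 1"] hp[of "i - 1"] hx[of i] by simp
qed

lemma sgn_recurrence_reflect:
  assumes "sgn_recurrence x"
  shows "sgn_recurrence (\<lambda>i. - x (c - i))"
  unfolding sgn_recurrence_def
proof
  fix i
  have "c - (i - 1) = c - i + 1" and "c - (i + 1) = c - i - 1"
    by simp_all
  moreover have "x (c - i - 1) + x (c - i + 1) = 2 * x (c - i) - sgn (x (c - i))"
    using assms unfolding sgn_recurrence_def by blast
  ultimately show "- x (c - (i - 1)) + - x (c - (i + 1)) = 2 * - x (c - i) - sgn (- x (c - i))"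
    by (simp only:) simp
qed

lemma sgn_recurrence_unique:
  assumes x: "sgn_recurrence x" and y: "sgn_recurrence y"
      and start: "x a = y a" "x (a + 1) = y (a + 1)"
  shows "x = y"
proof
  fix j
  have "x i = y i \<and> x (i + 1) = y (i + 1)" for i
  proof (induction i rule: int_induct[where k = a])
    case base
    show ?case using start by simp
  next
    case (step1 i)
    then show ?case
      using x[unfolded sgn_recurrence_def, rule_format, of "i + 1"]
            y[unfolded sgn_recurrence_def, rule_format, of "i + 1"]
      by (simp add: add.assoc)
  next
    case (step2 i)
    then show ?case
      using x[unfolded sgn_recurrence_def, rule_format, of i]
            y[unfolded sgn_recurrence_def, rule_format, of i]
      by simp
  qed
  then show "x j = y j" by simp
qed

lemma sgn_recurrence_antisymmetric_at_zero:
  assumes x: "sgn_recurrence x" and zero: "x K = 0"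
  shows "x (K - n) + x (K + n) = 0"
proof -
  have "x (K - 1) + x (K + 1) = 0"
    using x zero unfolding sgn_recurrence_def by simp
  with zero have "- x (2 * K - K) = x K" and "- x (2 * K - (K + 1)) = x (K + 1)"
    by (simp_all add: diff_diff_eq2 eq_neg_iff_add_eq_0 add.commute)
  then have "(\<lambda>i. - x (2 * K - i)) = x"
    by (rule sgn_recurrence_unique[OF sgn_recurrence_reflect[OF x] x])
  then have "- x (2 * K - (K + n)) = x (K + n)"
    by (rule fun_cong)
  then show ?thesis
    by (simp add: diff_diff_eq2 eq_neg_iff_add_eq_0)
qed

lemma sgn_recurrence_periodic:
  assumes x: "sgn_recurrence x" and "x 0 = 0" "x K = 0"
  shows "x (i + 2 * K) = x i"
proof -
  have "x (K - (K + i)) + x (K + (K + i)) = 0"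
    using sgn_recurrence_antisymmetric_at_zero[OF x \<open>x K = 0\<close>] .
  moreover have "K - (K + i) = - i" and "K + (K + i) = i + 2 * K"
    by simp_all
  moreover have "x (0 - i) + x (0 + i) = 0"
    using sgn_recurrence_antisymmetric_at_zero[OF x \<open>x 0 = 0\<close>] .
  ultimately show ?thesis
    by (simp only:) simp
qed

theorem mainTheorem2:
  fixes p x :: "int \<Rightarrow> real"
  assumes hp: "\<And>i. p (i + 1) = p i - sgn (x i)"
      and hx: "\<And>i. x (i + 1) = x i + p i - sgn (x i)"
  shows "(\<forall>K. x K = 0 \<longrightarrow> (\<forall>n::int. n \<ge> 1 \<longrightarrow> x (K - n) + x (K + n) = 0))
       \<and> (\<forall>K::int. K \<ge> 1 \<longrightarrow> x 0 = 0 \<longrightarrow> x K = 0 \<longrightarrow> (\<forall>i. x (i + 2 * K) = x i))"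
proof -
  have x: "sgn_recurrence x"
    using hp hx by (rule sgn_recurrence_if_system)
  show ?thesis
    using sgn_recurrence_antisymmetric_at_zero[OF x] sgn_recurrence_periodic[OF x] by blast
qed

end
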